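(* Let $\lambda$ be an infinite cardinal with $\lambda=\lambda^{\aleph_0}>|R|$, let $T$ be the set of all finite sequences $\tau\colon n\to\lambda$ ($n\in\omega$), and let $E=\bigoplus_{\tau\in T}R\tau$ be the free $R$-module with basis $T$. Let $H$ be a cotorsion-free $R$-module of cardinality less than $\lambda$, let $\widehat E$, $\widehat H$ be the $\mathbb S$-adic completions and $\widehat B=\widehat E\oplus\widehat H$, and let $\pi\colon\widehat B\to\widehat H$ be the canonical projection with kernel $\widehat E$. Let $H'\subseteq H$ be a pure submodule, $E'$ a direct summand of $E$, and let $\varphi\colon\mathrm{Dom}(\varphi)\to\widehat E\oplus H$ be an $R$-homomorphism defined on a submodule $\mathrm{Dom}(\varphi)$ with $E'\subseteq\mathrm{Dom}(\varphi)\subseteq\widehat E\oplus H'$, both inclusions pure, and $\pi(\mathrm{Dom}(\varphi))=H'$. Then $\varphi$ has a unique extension to an $R$-homomorphism $\widehat\varphi\colon\widehat{E'}\oplus H'\to\widehat E\oplus\widehat H=\widehat B$.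
   Context: Standing setting: $R$ is a commutative ring with $1$ with a distinguished countable multiplicatively closed subset $\mathbb S=\{s_n:n\in\omega\}$ such that $R$ is $\mathbb S$-reduced and $\mathbb S$-torsion-free and cotorsion-free. $\widehat R$ and $\widehat M$ denote $\mathbb S$-adic completions (topology with neighbourhoods of zero $q_mM$, $q_m=\prod_{n<m}s_n$). An $R$-module $M$ is cotorsion-free if $\mathrm{Hom}_R(\widehat R,M)=0$. A submodule $N\subseteq M$ is pure if $sM\cap N=sN$ for all $s\in\mathbb S$. *)

theory Defs
  imports Main "HOL-Library.Equipollence"
begin

record ('r, 'm) rmod =
  carrier :: "'m set"
  mzero :: 'm
  madd :: "'m \<Rightarrow> 'm \<Rightarrow> 'm"
  mneg :: "'m \<Rightarrow> 'm"
  msmult :: "'r \<Rightarrow> 'm \<Rightarrow> 'm"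

definition is_rmod :: "('r::comm_ring_1, 'm) rmod \<Rightarrow> bool" where
  "is_rmod M \<longleftrightarrow>
     mzero M \<in> carrier M \<and>
     (\<forall>x\<in>carrier M. \<forall>y\<in>carrier M. madd M x y \<in> carrier M) \<and>
     (\<forall>x\<in>carrier M. mneg M x \<in> carrier M) \<and>
     (\<forall>r. \<forall>x\<in>carrier M. msmult M r x \<in> carrier M) \<and>
     (\<forall>x\<in>carrier M. \<forall>y\<in>carrier M. \<forall>z\<in>carrier M.
        madd M (madd M x y) z = madd M x (madd M y z)) \<and>
     (\<forall>x\<in>carrier M. \<forall>y\<in>carrier M. madd M x y = madd M y x) \<and>
     (\<forall>x\<in>carrier M. madd M (mzero M) x = x) \<and>
     (\<forall>x\<in>carrier M. madd M (mneg M x) x = mzero M) \<and>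
     (\<forall>r. \<forall>x\<in>carrier M. \<forall>y\<in>carrier M.
        msmult M r (madd M x y) = madd M (msmult M r x) (msmult M r y)) \<and>
     (\<forall>r t. \<forall>x\<in>carrier M. msmult M (r + t) x = madd M (msmult M r x) (msmult M t x)) \<and>
     (\<forall>r t. \<forall>x\<in>carrier M. msmult M (r * t) x = msmult M r (msmult M t x)) \<and>
     (\<forall>x\<in>carrier M. msmult M 1 x = x)"

definition submodule :: "('r::comm_ring_1, 'm) rmod \<Rightarrow> 'm set \<Rightarrow> bool" where
  "submodule M N \<longleftrightarrow> N \<subseteq> carrier M \<and> mzero M \<in> N \<and>
     (\<forall>x\<in>N. \<forall>y\<in>N. madd M x y \<in> N) \<and> (\<forall>x\<in>N. mneg M x \<in> N) \<and>
     (\<forall>r. \<forall>x\<in>N. msmult M r x \<in> N)"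

definition submod :: "('r, 'm) rmod \<Rightarrow> 'm set \<Rightarrow> ('r, 'm) rmod" where
  "submod M N = M\<lparr>carrier := N\<rparr>"

definition direct_summand :: "('r::comm_ring_1, 'm) rmod \<Rightarrow> 'm set \<Rightarrow> bool" where
  "direct_summand M N \<longleftrightarrow> submodule M N \<and>
     (\<exists>C. submodule M C \<and> N \<inter> C = {mzero M} \<and>
          carrier M = {madd M a c | a c. a \<in> N \<and> c \<in> C})"

text \<open>Homomorphisms (only their values on the carrier matter).\<close>
definition rhom :: "('r::comm_ring_1, 'm) rmod \<Rightarrow> ('r, 'n) rmod \<Rightarrow> ('m \<Rightarrow> 'n) \<Rightarrow> bool" where
  "rhom M N f \<longleftrightarrow> (\<forall>x\<in>carrier M. f x \<in> carrier N) \<and>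
     (\<forall>x\<in>carrier M. \<forall>y\<in>carrier M. f (madd M x y) = madd N (f x) (f y)) \<and>
     (\<forall>r. \<forall>x\<in>carrier M. f (msmult M r x) = msmult N r (f x))"

definition prodmod :: "('r, 'm) rmod \<Rightarrow> ('r, 'n) rmod \<Rightarrow> ('r, 'm \<times> 'n) rmod" where
  "prodmod M N = \<lparr>carrier = carrier M \<times> carrier N,
     mzero = (mzero M, mzero N),
     madd = (\<lambda>(a, b) (c, d). (madd M a c, madd N b d)),
     mneg = (\<lambda>(a, b). (mneg M a, mneg N b)),
     msmult = (\<lambda>r (a, b). (msmult M r a, msmult N r b))\<rparr>"

definition ringmod :: "('r::comm_ring_1, 'r) rmod" where
  "ringmod = \<lparr>carrier = UNIV, mzero = 0, madd = (+), mneg = uminus, msmult = (*)\<rparr>"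

text \<open>The free R-module with basis T = all finite sequences (lists) over 'k:
  finitely supported functions T \<Rightarrow> R; a sequence \<tau> corresponds to the indicator of \<tau>.\<close>
definition freemod :: "('r::comm_ring_1, 'k list \<Rightarrow> 'r) rmod" where
  "freemod = \<lparr>carrier = {f. finite {t. f t \<noteq> 0}},
     mzero = (\<lambda>t. 0),
     madd = (\<lambda>f g t. f t + g t),
     mneg = (\<lambda>f t. - f t),
     msmult = (\<lambda>r f t. r * f t)\<rparr>"

text \<open>The distinguished countable multiplicatively closed set is S = range s;
  q_m = s_0 * ... * s_(m-1).\<close>
definition qmul :: "(nat \<Rightarrow> 'r::comm_ring_1) \<Rightarrow> nat \<Rightarrow> 'r" where
  "qmul s m = (\<Prod>n<m. s n)"

definition qsub :: "(nat \<Rightarrow> 'r::comm_ring_1) \<Rightarrow> ('r, 'm) rmod \<Rightarrow> nat \<Rightarrow> 'm set" where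
  "qsub s M m = msmult M (qmul s m) ` carrier M"

definition mult_closed_seq :: "(nat \<Rightarrow> 'r::comm_ring_1) \<Rightarrow> bool" where
  "mult_closed_seq s \<longleftrightarrow> 1 \<in> range s \<and> (\<forall>a\<in>range s. \<forall>b\<in>range s. a * b \<in> range s)"

definition S_reduced_ring :: "(nat \<Rightarrow> 'r::comm_ring_1) \<Rightarrow> bool" where
  "S_reduced_ring s \<longleftrightarrow> (\<Inter>n. range (\<lambda>r. s n * r)) = {0}"

definition S_torsion_free_ring :: "(nat \<Rightarrow> 'r::comm_ring_1) \<Rightarrow> bool" where
  "S_torsion_free_ring s \<longleftrightarrow> (\<forall>n r. s n * r = 0 \<longrightarrow> r = 0)"

definition pure :: "(nat \<Rightarrow> 'r::comm_ring_1) \<Rightarrow> ('r, 'm) rmod \<Rightarrow> 'm set \<Rightarrow> bool" where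
  "pure s M N \<longleftrightarrow> (\<forall>n. (msmult M (s n) ` carrier M) \<inter> N = msmult M (s n) ` N)"

definition coset :: "('r, 'm) rmod \<Rightarrow> 'm \<Rightarrow> 'm set \<Rightarrow> 'm set" where
  "coset M a N = madd M a ` N"

text \<open>The S-adic completion, realised as the inverse limit of the M / q_m M:
  an element is a compatible sequence of cosets x m \<in> M / q_m M.\<close>
definition completion :: "(nat \<Rightarrow> 'r::comm_ring_1) \<Rightarrow> ('r, 'm) rmod \<Rightarrow> ('r, nat \<Rightarrow> 'm set) rmod" where
  "completion s M = \<lparr>
     carrier = {x. (\<forall>m. \<exists>a\<in>carrier M. x m = coset M a (qsub s M m)) \<and> (\<forall>m. x (Suc m) \<subseteq> x m)},
     mzero = (\<lambda>m. qsub s M m),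
     madd = (\<lambda>x y m. {madd M a b | a b. a \<in> x m \<and> b \<in> y m}),
     mneg = (\<lambda>x m. mneg M ` x m),
     msmult = (\<lambda>r x m. {madd M (msmult M r a) b | a b. a \<in> x m \<and> b \<in> qsub s M m})\<rparr>"

definition cemb :: "(nat \<Rightarrow> 'r::comm_ring_1) \<Rightarrow> ('r, 'm) rmod \<Rightarrow> 'm \<Rightarrow> (nat \<Rightarrow> 'm set)" where
  "cemb s M a = (\<lambda>m. coset M a (qsub s M m))"

text \<open>Map induced by the inclusion N \<subseteq> M on completions
  (completion of submod M N into completion of M).\<close>
definition compl_incl :: "(nat \<Rightarrow> 'r::comm_ring_1) \<Rightarrow> ('r, 'm) rmod \<Rightarrow> (nat \<Rightarrow> 'm set) \<Rightarrow> (nat \<Rightarrow> 'm set)" where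
  "compl_incl s M x = (\<lambda>m. {madd M a b | a b. a \<in> x m \<and> b \<in> qsub s M m})"

definition sub_completion :: "(nat \<Rightarrow> 'r::comm_ring_1) \<Rightarrow> ('r, 'm) rmod \<Rightarrow> 'm set \<Rightarrow> (nat \<Rightarrow> 'm set) set" where
  "sub_completion s M N = compl_incl s M ` carrier (completion s (submod M N))"

definition cotorsion_free :: "(nat \<Rightarrow> 'r::comm_ring_1) \<Rightarrow> ('r, 'm) rmod \<Rightarrow> bool" where
  "cotorsion_free s M \<longleftrightarrow>
     (\<forall>f. rhom (completion s (ringmod :: ('r, 'r) rmod)) M f \<longrightarrow>
          (\<forall>x\<in>carrier (completion s (ringmod :: ('r, 'r) rmod)). f x = mzero M))"

end

theory Submission
  imports Defs
begin

text \<open>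
  Let \<open>X\<close> be the sum of the completion of \<open>E'\<close> and \<open>H'\<close>. For every \<open>n\<close>, each \<open>x \<in> X\<close> is
  congruent modulo \<open>q\<^sub>n X\<close> to an element \<open>d\<close> of \<open>Dom \<phi>\<close>: the \<open>H'\<close>-component is matched since
  \<open>\<pi>(Dom \<phi>) = H'\<close>, and the remaining difference lies in the completion of \<open>E'\<close>, in which \<open>E'\<close>
  is dense because \<open>E'\<close> is a pure submodule of the torsion-free module \<open>E\<close>. As \<open>Dom \<phi>\<close> is
  pure in \<open>X\<close>, two such \<open>d\<close> differ by an element of \<open>q\<^sub>n Dom \<phi>\<close>, so the class of \<open>\<phi>(d)\<close>
  modulo \<open>q\<^sub>n\<close> depends only on \<open>x\<close> and \<open>n\<close>. These classes form a compatible sequence, i.e. an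
  element of the completion, which is the value of the extension at \<open>x\<close>; any extension has to
  agree with it level by level.
\<close>

section \<open>Modules\<close>

lemma submod_simps [simp]:
  "carrier (submod M N) = N" "madd (submod M N) = madd M" "mzero (submod M N) = mzero M"
  "mneg (submod M N) = mneg M" "msmult (submod M N) = msmult M"
  by (simp_all add: submod_def)

lemma prodmod_simps [simp]:
  "carrier (prodmod M N) = carrier M \<times> carrier N"
  "mzero (prodmod M N) = (mzero M, mzero N)"
  "madd (prodmod M N) p q = (madd M (fst p) (fst q), madd N (snd p) (snd q))"
  "mneg (prodmod M N) p = (mneg M (fst p), mneg N (snd p))"
  "msmult (prodmod M N) r p = (msmult M r (fst p), msmult N r (snd p))"
  by (simp_all add: prodmod_def case_prod_beta)

lemma prodmod_submod: "prodmod A (submod B N) = submod (prodmod A B) (carrier A \<times> N)"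
  by (simp add: prodmod_def submod_def)

lemma submodule_submod: "submodule (submod M S) N \<Longrightarrow> S \<subseteq> carrier M \<Longrightarrow> submodule M N"
  by (auto simp: submodule_def)

lemma freemod_simps:
  "carrier (freemod :: ('r::comm_ring_1, 'k list \<Rightarrow> 'r) rmod) = {f. finite {t. f t \<noteq> 0}}"
  "mzero (freemod :: ('r, 'k list \<Rightarrow> 'r) rmod) = (\<lambda>t. 0)"
  "madd (freemod :: ('r, 'k list \<Rightarrow> 'r) rmod) = (\<lambda>f g t. f t + g t)"
  "mneg (freemod :: ('r, 'k list \<Rightarrow> 'r) rmod) = (\<lambda>f t. - f t)"
  "msmult (freemod :: ('r, 'k list \<Rightarrow> 'r) rmod) = (\<lambda>r f t. r * f t)"
  by (simp_all add: freemod_def)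

lemma submodule_Times:
  "submodule A E \<Longrightarrow> submodule B H \<Longrightarrow> submodule (prodmod A B) (E \<times> H)"
  by (auto simp: submodule_def)

lemma rhom_prodmod_iff:
  "rhom A (prodmod B C) f \<longleftrightarrow> rhom A B (fst \<circ> f) \<and> rhom A C (snd \<circ> f)"
  unfolding rhom_def prodmod_simps mem_Times_iff prod_eq_iff comp_def by simp blast

lemma rhom_comp: "rhom A B f \<Longrightarrow> rhom B C g \<Longrightarrow> rhom A C (g \<circ> f)"
  by (simp add: rhom_def)

lemma pure_submod_mono:
  assumes "pure s (submod M Y) N" "N \<subseteq> X" "X \<subseteq> Y"
  shows "pure s (submod M X) N"
  unfolding pure_def submod_simps
proof
  fix n
  have "msmult M (s n) ` Y \<inter> N = msmult M (s n) ` N"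
    using assms(1) by (simp add: pure_def)
  moreover have "msmult M (s n) ` N \<subseteq> msmult M (s n) ` X" "msmult M (s n) ` X \<subseteq> msmult M (s n) ` Y"
    using assms(2,3) by (simp_all add: image_mono)
  ultimately show "msmult M (s n) ` X \<inter> N = msmult M (s n) ` N" by blast
qed

locale rmodule =
  fixes M :: "('r::comm_ring_1, 'm) rmod"
  assumes is_rmod: "is_rmod M"
begin

abbreviation "C \<equiv> carrier M"
abbreviation add (infixl "\<oplus>" 65) where "add \<equiv> madd M"
abbreviation "z0 \<equiv> mzero M"
abbreviation "ng \<equiv> mneg M"
abbreviation smult (infixr "\<odot>" 70) where "smult \<equiv> msmult M"

lemma zero_closed [simp]: "z0 \<in> C"
  and add_closed [simp]: "x \<in> C \<Longrightarrow> y \<in> C \<Longrightarrow> x \<oplus> y \<in> C"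
  and neg_closed [simp]: "x \<in> C \<Longrightarrow> ng x \<in> C"
  and smult_closed [simp]: "x \<in> C \<Longrightarrow> r \<odot> x \<in> C"
  and a_assoc: "x \<in> C \<Longrightarrow> y \<in> C \<Longrightarrow> z \<in> C \<Longrightarrow> (x \<oplus> y) \<oplus> z = x \<oplus> (y \<oplus> z)"
  and a_comm: "x \<in> C \<Longrightarrow> y \<in> C \<Longrightarrow> x \<oplus> y = y \<oplus> x"
  and l_zero [simp]: "x \<in> C \<Longrightarrow> z0 \<oplus> x = x"
  and l_neg [simp]: "x \<in> C \<Longrightarrow> ng x \<oplus> x = z0"
  and smult_r_distr: "x \<in> C \<Longrightarrow> y \<in> C \<Longrightarrow> r \<odot> (x \<oplus> y) = r \<odot> x \<oplus> r \<odot> y"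
  and smult_l_distr: "x \<in> C \<Longrightarrow> (r + t) \<odot> x = r \<odot> x \<oplus> t \<odot> x"
  and smult_assoc: "x \<in> C \<Longrightarrow> (r * t) \<odot> x = r \<odot> (t \<odot> x)"
  and smult_one [simp]: "x \<in> C \<Longrightarrow> 1 \<odot> x = x"
  using is_rmod unfolding is_rmod_def by auto

lemma r_zero [simp]: "x \<in> C \<Longrightarrow> x \<oplus> z0 = x"
  by (metis a_comm l_zero zero_closed)

lemma r_neg [simp]: "x \<in> C \<Longrightarrow> x \<oplus> ng x = z0"
  by (metis a_comm l_neg neg_closed)

lemma a_lcomm: "x \<in> C \<Longrightarrow> y \<in> C \<Longrightarrow> z \<in> C \<Longrightarrow> x \<oplus> (y \<oplus> z) = y \<oplus> (x \<oplus> z)"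
  by (metis a_assoc a_comm)

lemma a_add_swap:
  "a \<in> C \<Longrightarrow> b \<in> C \<Longrightarrow> c \<in> C \<Longrightarrow> d \<in> C \<Longrightarrow> (a \<oplus> b) \<oplus> (c \<oplus> d) = (a \<oplus> c) \<oplus> (b \<oplus> d)"
  by (simp add: a_assoc a_lcomm)

lemma l_cancel: "x \<in> C \<Longrightarrow> y \<in> C \<Longrightarrow> z \<in> C \<Longrightarrow> x \<oplus> y = x \<oplus> z \<Longrightarrow> y = z"
  by (metis a_assoc l_neg l_zero neg_closed)

lemma add_minus_cancel: "x \<in> C \<Longrightarrow> y \<in> C \<Longrightarrow> x \<oplus> (ng x \<oplus> y) = y"
  by (metis a_assoc r_neg l_zero neg_closed)

lemma minus_add_cancel: "x \<in> C \<Longrightarrow> y \<in> C \<Longrightarrow> ng x \<oplus> (x \<oplus> y) = y"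
  by (metis a_assoc l_neg l_zero neg_closed)

lemma minus_equality: "x \<in> C \<Longrightarrow> y \<in> C \<Longrightarrow> x \<oplus> y = z0 \<Longrightarrow> y = ng x"
  by (metis l_cancel r_neg neg_closed)

lemma minus_minus [simp]: "x \<in> C \<Longrightarrow> ng (ng x) = x"
  by (metis minus_equality l_neg neg_closed)

lemma minus_add: "x \<in> C \<Longrightarrow> y \<in> C \<Longrightarrow> ng (x \<oplus> y) = ng x \<oplus> ng y"
  using a_add_swap[of x y "ng x" "ng y"] by (intro minus_equality[symmetric]) simp_all

lemma smult_r_null [simp]: "r \<odot> z0 = z0"
  using l_cancel[of "r \<odot> z0" "r \<odot> z0" z0] smult_r_distr[of z0 z0 r] by simp

lemma smult_r_minus: "x \<in> C \<Longrightarrow> r \<odot> ng x = ng (r \<odot> x)"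
  by (metis minus_equality r_neg smult_r_distr smult_closed neg_closed smult_r_null)

lemma add_diff_cancel: "x \<in> C \<Longrightarrow> y \<in> C \<Longrightarrow> x \<oplus> (y \<oplus> ng x) = y"
  by (metis add_minus_cancel a_comm neg_closed)

lemma diff_eq_smult_diff:
  assumes "d \<in> C" "d' \<in> C" "w \<in> C" "w' \<in> C" and "d \<oplus> r \<odot> w = d' \<oplus> r \<odot> w'"
  shows "d \<oplus> ng d' = r \<odot> (w' \<oplus> ng w)"
proof -
  have "d \<oplus> ng d' = ((d \<oplus> r \<odot> w) \<oplus> ng (r \<odot> w)) \<oplus> ng d'"
    using assms(1,3) by (simp add: a_assoc)
  also have "\<dots> = (d' \<oplus> r \<odot> w') \<oplus> (ng (r \<odot> w) \<oplus> ng d')"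
    using assms by (simp add: a_assoc)
  also have "\<dots> = r \<odot> w' \<oplus> ng (r \<odot> w)"
    using assms(1-4) by (metis a_add_swap a_comm add_closed l_zero r_neg neg_closed smult_closed)
  also have "\<dots> = r \<odot> (w' \<oplus> ng w)"
    using assms(3,4) by (simp add: smult_r_distr smult_r_minus)
  finally show ?thesis .
qed

lemma submoduleD:
  assumes "submodule M N"
  shows "N \<subseteq> C" "z0 \<in> N" "x \<in> N \<Longrightarrow> y \<in> N \<Longrightarrow> x \<oplus> y \<in> N" "x \<in> N \<Longrightarrow> ng x \<in> N"
    "x \<in> N \<Longrightarrow> r \<odot> x \<in> N"
  using assms by (auto simp: submodule_def)

lemma coset_self: "submodule M N \<Longrightarrow> a \<in> C \<Longrightarrow> a \<in> coset M a N"
  unfolding coset_def using submoduleD(2) r_zero by (metis image_eqI)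

lemma coset_subset: "submodule M N \<Longrightarrow> a \<in> C \<Longrightarrow> coset M a N \<subseteq> C"
  unfolding coset_def using submoduleD(1)[of N] by (auto intro!: add_closed)

lemma coset_eq:
  assumes N: "submodule M N" and a: "a \<in> C" and b: "b \<in> coset M a N"
  shows "coset M b N = coset M a N"
proof -
  obtain n0 where n0: "n0 \<in> N" "b = a \<oplus> n0" using b by (auto simp: coset_def)
  have n0c: "n0 \<in> C" using n0 submoduleD(1)[OF N] by auto
  show ?thesis
  proof
    show "coset M b N \<subseteq> coset M a N"
    proof
      fix x assume "x \<in> coset M b N"
      then obtain n where n: "n \<in> N" "x = b \<oplus> n" by (auto simp: coset_def)
      have "x = a \<oplus> (n0 \<oplus> n)" using n n0 n0c a submoduleD(1)[OF N] by (auto simp: a_assoc)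
      then show "x \<in> coset M a N" unfolding coset_def using submoduleD(3)[OF N] n n0 by auto
    qed
  next
    show "coset M a N \<subseteq> coset M b N"
    proof
      fix x assume "x \<in> coset M a N"
      then obtain n where n: "n \<in> N" "x = a \<oplus> n" by (auto simp: coset_def)
      have nc: "n \<in> C" using n submoduleD(1)[OF N] by auto
      have "x = b \<oplus> (ng n0 \<oplus> n)" using n n0 n0c a nc by (simp add: a_assoc add_minus_cancel)
      then show "x \<in> coset M b N" unfolding coset_def using submoduleD(3,4)[OF N] n n0 by auto
    qed
  qed
qed

lemma coset_sum:
  assumes N: "submodule M N" and a: "a \<in> C" and b: "b \<in> C"
  shows "{x \<oplus> y |x y. x \<in> coset M a N \<and> y \<in> coset M b N} = coset M (a \<oplus> b) N"
proof -
  have NC: "\<And>n. n \<in> N \<Longrightarrow> n \<in> C" using submoduleD(1)[OF N] by auto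
  show ?thesis
  proof (intro set_eqI iffI)
    fix x assume "x \<in> {x \<oplus> y |x y. x \<in> coset M a N \<and> y \<in> coset M b N}"
    then obtain n1 n2 where n: "n1 \<in> N" "n2 \<in> N" "x = (a \<oplus> n1) \<oplus> (b \<oplus> n2)"
      by (auto simp: coset_def)
    then have "x = (a \<oplus> b) \<oplus> (n1 \<oplus> n2)" using a b NC a_add_swap[of a n1 b n2] by auto
    then show "x \<in> coset M (a \<oplus> b) N" using n submoduleD(3)[OF N] by (auto simp: coset_def)
  next
    fix x assume "x \<in> coset M (a \<oplus> b) N"
    then obtain n where n: "n \<in> N" "x = (a \<oplus> b) \<oplus> n" by (auto simp: coset_def)
    have nC: "n \<in> C" using NC n by auto
    have "(a \<oplus> n) \<oplus> (b \<oplus> z0) = (a \<oplus> b) \<oplus> (n \<oplus> z0)" by (rule a_add_swap[OF a nC b zero_closed])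
    then have "x = (a \<oplus> n) \<oplus> (b \<oplus> z0)" using n nC by simp
    moreover have "a \<oplus> n \<in> coset M a N" "b \<oplus> z0 \<in> coset M b N"
      using n submoduleD(2)[OF N] by (auto simp: coset_def)
    ultimately show "x \<in> {x \<oplus> y |x y. x \<in> coset M a N \<and> y \<in> coset M b N}" by blast
  qed
qed

lemma coset_smult:
  assumes N: "submodule M N" and a: "a \<in> C"
  shows "{r \<odot> x \<oplus> y |x y. x \<in> coset M a N \<and> y \<in> N} = coset M (r \<odot> a) N"
proof -
  have NC: "\<And>n. n \<in> N \<Longrightarrow> n \<in> C" using submoduleD(1)[OF N] by auto
  show ?thesis
  proof (intro set_eqI iffI)
    fix x assume "x \<in> {r \<odot> x \<oplus> y |x y. x \<in> coset M a N \<and> y \<in> N}"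
    then obtain n1 n2 where n: "n1 \<in> N" "n2 \<in> N" "x = r \<odot> (a \<oplus> n1) \<oplus> n2"
      by (auto simp: coset_def)
    then have "x = r \<odot> a \<oplus> (r \<odot> n1 \<oplus> n2)" using a NC by (simp add: smult_r_distr a_assoc)
    then show "x \<in> coset M (r \<odot> a) N" using n submoduleD(3,5)[OF N] by (auto simp: coset_def)
  next
    fix x assume "x \<in> coset M (r \<odot> a) N"
    then obtain n where n: "n \<in> N" "x = r \<odot> a \<oplus> n" by (auto simp: coset_def)
    have "x = r \<odot> (a \<oplus> z0) \<oplus> n" using n a by simp
    moreover have "a \<oplus> z0 \<in> coset M a N"
      using submoduleD(2)[OF N] by (auto simp: coset_def)
    ultimately show "x \<in> {r \<odot> x \<oplus> y |x y. x \<in> coset M a N \<and> y \<in> N}" using n by blast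
  qed
qed

lemma coset_neg:
  assumes N: "submodule M N" and a: "a \<in> C"
  shows "ng ` coset M a N = coset M (ng a) N"
proof -
  have NC: "\<And>n. n \<in> N \<Longrightarrow> n \<in> C" using submoduleD(1)[OF N] by auto
  show ?thesis
  proof (intro set_eqI iffI)
    fix x assume "x \<in> ng ` coset M a N"
    then obtain n where n: "n \<in> N" "x = ng (a \<oplus> n)" by (auto simp: coset_def)
    then have "x = ng a \<oplus> ng n" using a NC minus_add by auto
    then show "x \<in> coset M (ng a) N" using n submoduleD(4)[OF N] by (auto simp: coset_def)
  next
    fix x assume "x \<in> coset M (ng a) N"
    then obtain n where n: "n \<in> N" "x = ng a \<oplus> n" by (auto simp: coset_def)
    have "x = ng (a \<oplus> ng n)" using n a NC minus_add by simp
    then show "x \<in> ng ` coset M a N" using n submoduleD(4)[OF N] by (auto simp: coset_def)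
  qed
qed

lemma coset_sum_submodule:
  assumes N: "submodule M N" and N': "N' \<subseteq> N" "z0 \<in> N'" and a: "a \<in> C"
  shows "{u \<oplus> b |u b. u \<in> coset M a N' \<and> b \<in> N} = coset M a N"
proof (intro set_eqI iffI)
  fix x assume "x \<in> {u \<oplus> b |u b. u \<in> coset M a N' \<and> b \<in> N}"
  then obtain n1 n2 where n: "n1 \<in> N'" "n2 \<in> N" "x = (a \<oplus> n1) \<oplus> n2" by (auto simp: coset_def)
  have c: "n1 \<in> C" "n2 \<in> C" using n N' submoduleD(1)[OF N] by auto
  have "x = a \<oplus> (n1 \<oplus> n2)" using n c a a_assoc by simp
  then show "x \<in> coset M a N" using n N' submoduleD(3)[OF N] by (auto simp: coset_def)
next
  fix x assume "x \<in> coset M a N"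
  then obtain n where n: "n \<in> N" "x = a \<oplus> n" by (auto simp: coset_def)
  have "x = (a \<oplus> z0) \<oplus> n" using n a by simp
  moreover have "a \<oplus> z0 \<in> coset M a N'" using N' by (auto simp: coset_def)
  ultimately show "x \<in> {u \<oplus> b |u b. u \<in> coset M a N' \<and> b \<in> N}" using n by blast
qed

lemma coset_mono: "N \<subseteq> N' \<Longrightarrow> coset M a N \<subseteq> coset M a N'"
  by (auto simp: coset_def)

lemma coset_zero: "submodule M N \<Longrightarrow> coset M z0 N = N"
  using submoduleD(1)[of N] by (force simp: coset_def)

end

lemma prodmod_is_rmod:
  assumes "is_rmod A" "is_rmod B"
  shows "is_rmod (prodmod A B)"
proof -
  interpret A: rmodule A by (rule rmodule.intro) fact
  interpret B: rmodule B by (rule rmodule.intro) fact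
  show ?thesis
    unfolding is_rmod_def prodmod_simps mem_Times_iff
    by (auto simp: A.a_assoc B.a_assoc A.smult_r_distr B.smult_r_distr A.smult_l_distr
        B.smult_l_distr A.smult_assoc B.smult_assoc prod_eq_iff intro: A.a_comm B.a_comm)
qed

lemma freemod_is_rmod: "is_rmod (freemod :: ('r::comm_ring_1, 'k list \<Rightarrow> 'r) rmod)"
  unfolding is_rmod_def freemod_simps
proof (intro conjI ballI allI)
  fix x y :: "'k list \<Rightarrow> 'r"
  assume "x \<in> {f. finite {t. f t \<noteq> 0}}" "y \<in> {f. finite {t. f t \<noteq> 0}}"
  then show "(\<lambda>t. x t + y t) \<in> {f. finite {t. f t \<noteq> 0}}"
    by (auto intro: finite_subset[of _ "{t. x t \<noteq> 0} \<union> {t. y t \<noteq> 0}"])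
next
  fix r and x :: "'k list \<Rightarrow> 'r"
  assume "x \<in> {f. finite {t. f t \<noteq> 0}}"
  then show "(\<lambda>t. r * x t) \<in> {f. finite {t. f t \<noteq> 0}}"
    by (auto intro: finite_subset[of _ "{t. x t \<noteq> 0}"])
qed (auto simp: algebra_simps)

section \<open>The \<open>\<S>\<close>-adic completion\<close>

lemma qmul_0 [simp]: "qmul s 0 = 1"
  by (simp add: qmul_def)

lemma qmul_Suc: "qmul s (Suc n) = qmul s n * s n"
  by (simp add: qmul_def)

lemma qmul_dvd: "m \<le> n \<Longrightarrow> qmul s m dvd qmul s n"
proof (induction n)
  case (Suc n)
  show ?case
  proof (cases "m = Suc n")
    case False
    with Suc have "qmul s m dvd qmul s n" by simp
    then show ?thesis by (simp add: qmul_Suc)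
  qed simp
qed simp

lemma qmul_in_range: "mult_closed_seq s \<Longrightarrow> qmul s n \<in> range s"
proof (induction n)
  case 0
  then show ?case by (simp add: mult_closed_seq_def)
next
  case (Suc n)
  then obtain i where "qmul s n = s i" by auto
  moreover have "s i * s n \<in> range s" using Suc.prems unfolding mult_closed_seq_def by blast
  ultimately show ?case by (simp add: qmul_Suc)
qed

lemma qmul_torsion_free: "S_torsion_free_ring s \<Longrightarrow> qmul s n * r = 0 \<Longrightarrow> r = 0"
proof (induction n arbitrary: r)
  case (Suc n)
  then have "qmul s n * (s n * r) = 0" by (simp add: qmul_Suc mult.assoc)
  then have "s n * r = 0" using Suc by blast
  then show ?case using Suc.prems(1) unfolding S_torsion_free_ring_def by blast
qed simp

lemma qmul_cofinal: "mult_closed_seq s \<Longrightarrow> \<exists>N\<ge>N0. qmul s n * qmul s k dvd qmul s N"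
proof -
  assume mc: "mult_closed_seq s"
  then obtain i1 i2 where "qmul s n = s i1" "qmul s k = s i2"
    using qmul_in_range by (metis rangeE)
  moreover have "s i1 * s i2 \<in> range s" using mc unfolding mult_closed_seq_def by blast
  ultimately have "qmul s n * qmul s k \<in> range s" by simp
  then obtain j where j: "qmul s n * qmul s k = s j" by auto
  have "s j dvd qmul s (Suc j)" by (simp add: qmul_Suc)
  also have "\<dots> dvd qmul s (max N0 (Suc j))" by (rule qmul_dvd) simp
  finally show ?thesis using j by (intro exI[of _ "max N0 (Suc j)"]) simp
qed

lemma pure_qmul:
  assumes "mult_closed_seq s" "pure s M N" "u \<in> carrier M" "msmult M (qmul s n) u \<in> N"
  shows "\<exists>e\<in>N. msmult M (qmul s n) u = msmult M (qmul s n) e"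
proof -
  obtain j where j: "qmul s n = s j" using qmul_in_range[OF assms(1)] by (metis rangeE)
  have "msmult M (s j) u \<in> msmult M (s j) ` carrier M \<inter> N" using assms(3,4) j by simp
  then show ?thesis using assms(2) j unfolding pure_def by auto
qed

locale s_adic_module = rmodule M for M :: "('r::comm_ring_1, 'm) rmod" +
  fixes s :: "nat \<Rightarrow> 'r"
begin

abbreviation "Q n \<equiv> qsub s M n"
abbreviation "Mh \<equiv> completion s M"

lemma Q_submodule: "submodule M (Q n)"
  unfolding submodule_def qsub_def
proof (intro conjI ballI allI)
  show "(\<odot>) (qmul s n) ` C \<subseteq> C" by auto
  show "z0 \<in> (\<odot>) (qmul s n) ` C" using smult_r_null zero_closed by (metis image_eqI)
next
  fix x y assume "x \<in> (\<odot>) (qmul s n) ` C" "y \<in> (\<odot>) (qmul s n) ` C"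
  then obtain a b where "a \<in> C" "b \<in> C" "x = qmul s n \<odot> a" "y = qmul s n \<odot> b" by auto
  then show "x \<oplus> y \<in> (\<odot>) (qmul s n) ` C" using smult_r_distr by (metis add_closed image_eqI)
next
  fix x assume "x \<in> (\<odot>) (qmul s n) ` C"
  then obtain a where "a \<in> C" "x = qmul s n \<odot> a" by auto
  then show "ng x \<in> (\<odot>) (qmul s n) ` C" using smult_r_minus by (metis neg_closed image_eqI)
next
  fix r x assume "x \<in> (\<odot>) (qmul s n) ` C"
  then obtain a where a: "a \<in> C" "x = qmul s n \<odot> a" by auto
  then have "r \<odot> x = qmul s n \<odot> (r \<odot> a)" using smult_assoc by (metis mult.commute)
  then show "r \<odot> x \<in> (\<odot>) (qmul s n) ` C" using a by auto
qed

lemma Q_closed: "x \<in> Q n \<Longrightarrow> x \<in> C" using submoduleD(1)[OF Q_submodule] by auto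

lemma Q_dvd: "qmul s k dvd r \<Longrightarrow> x \<in> C \<Longrightarrow> r \<odot> x \<in> Q k"
proof -
  assume "qmul s k dvd r" "x \<in> C"
  then obtain c where "r = qmul s k * c" by (auto simp: dvd_def)
  then have "r \<odot> x = qmul s k \<odot> (c \<odot> x)" using \<open>x \<in> C\<close> smult_assoc by simp
  then show ?thesis using \<open>x \<in> C\<close> by (simp add: qsub_def)
qed

lemma Q_mono: "k \<le> n \<Longrightarrow> Q n \<subseteq> Q k"
  using Q_dvd[OF qmul_dvd] by (auto simp: qsub_def)

lemma qmul_in_Q: "x \<in> C \<Longrightarrow> qmul s n \<odot> x \<in> Q n" by (simp add: qsub_def)

lemma coset_absorb: "a \<in> C \<Longrightarrow> t \<in> Q n \<Longrightarrow> coset M (a \<oplus> t) (Q n) = coset M a (Q n)"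
  by (rule coset_eq[OF Q_submodule]) (auto simp: coset_def)

lemma compl_carrier_iff: "x \<in> carrier Mh \<longleftrightarrow> (\<forall>m. \<exists>a\<in>C. x m = coset M a (Q m)) \<and> (\<forall>m. x (Suc m) \<subseteq> x m)"
  by (simp add: completion_def)

lemma compl_ops:
  "mzero Mh = (\<lambda>m. Q m)"
  "madd Mh x y = (\<lambda>m. {a \<oplus> b | a b. a \<in> x m \<and> b \<in> y m})"
  "mneg Mh x = (\<lambda>m. ng ` x m)"
  "msmult Mh r x = (\<lambda>m. {r \<odot> a \<oplus> b | a b. a \<in> x m \<and> b \<in> Q m})"
  by (simp_all add: completion_def)

lemma compl_level_mono: "x \<in> carrier Mh \<Longrightarrow> k \<le> m \<Longrightarrow> x m \<subseteq> x k"
proof (induction m)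
  case 0 then show ?case by simp
next
  case (Suc m)
  show ?case
  proof (cases "k = Suc m")
    case False
    then have "x m \<subseteq> x k" using Suc by simp
    moreover have "x (Suc m) \<subseteq> x m" using Suc.prems compl_carrier_iff by blast
    ultimately show ?thesis by blast
  qed simp
qed

lemma compl_level_nonempty: "x \<in> carrier Mh \<Longrightarrow> \<exists>a. a \<in> C \<and> a \<in> x m"
proof -
  assume "x \<in> carrier Mh"
  then obtain a where "a \<in> C" "x m = coset M a (Q m)" unfolding compl_carrier_iff by blast
  then show ?thesis using coset_self[OF Q_submodule[of m]] by blast
qed

lemma compl_level_eq: "x \<in> carrier Mh \<Longrightarrow> a \<in> x m \<Longrightarrow> x m = coset M a (Q m)"
proof -
  assume x: "x \<in> carrier Mh" and a: "a \<in> x m"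
  obtain b where b: "b \<in> C" "x m = coset M b (Q m)" using x unfolding compl_carrier_iff by blast
  show ?thesis using coset_eq[OF Q_submodule[of m] b(1), of a] a b by simp
qed

lemma compl_level_subset: "x \<in> carrier Mh \<Longrightarrow> x m \<subseteq> C"
proof -
  assume x: "x \<in> carrier Mh"
  obtain b where b: "b \<in> C" "x m = coset M b (Q m)" using x unfolding compl_carrier_iff by blast
  show ?thesis using coset_subset[OF Q_submodule[of m] b(1)] b by simp
qed

lemma compl_level_closed: "x \<in> carrier Mh \<Longrightarrow> a \<in> x m \<Longrightarrow> a \<in> C"
  using compl_level_subset by blast

lemma compl_add_level: "x \<in> carrier Mh \<Longrightarrow> y \<in> carrier Mh \<Longrightarrow> a \<in> x m \<Longrightarrow> b \<in> y m \<Longrightarrow>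
   madd Mh x y m = coset M (a \<oplus> b) (Q m)"
proof -
  assume x: "x \<in> carrier Mh" and y: "y \<in> carrier Mh" and a: "a \<in> x m" and b: "b \<in> y m"
  have "madd Mh x y m = {u \<oplus> v |u v. u \<in> x m \<and> v \<in> y m}" by (simp add: compl_ops)
  also have "\<dots> = {u \<oplus> v |u v. u \<in> coset M a (Q m) \<and> v \<in> coset M b (Q m)}"
    using compl_level_eq[OF x a] compl_level_eq[OF y b] by simp
  also have "\<dots> = coset M (a \<oplus> b) (Q m)"
    by (rule coset_sum[OF Q_submodule compl_level_closed[OF x a] compl_level_closed[OF y b]])
  finally show ?thesis .
qed

lemma compl_smult_level: "x \<in> carrier Mh \<Longrightarrow> a \<in> x m \<Longrightarrow> msmult Mh r x m = coset M (r \<odot> a) (Q m)"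
proof -
  assume x: "x \<in> carrier Mh" and a: "a \<in> x m"
  have "msmult Mh r x m = {r \<odot> u \<oplus> v |u v. u \<in> x m \<and> v \<in> Q m}" by (simp add: compl_ops)
  also have "\<dots> = {r \<odot> u \<oplus> v |u v. u \<in> coset M a (Q m) \<and> v \<in> Q m}"
    using compl_level_eq[OF x a] by simp
  also have "\<dots> = coset M (r \<odot> a) (Q m)"
    by (rule coset_smult[OF Q_submodule compl_level_closed[OF x a]])
  finally show ?thesis .
qed

lemma compl_neg_level: "x \<in> carrier Mh \<Longrightarrow> a \<in> x m \<Longrightarrow> mneg Mh x m = coset M (ng a) (Q m)"
proof -
  assume x: "x \<in> carrier Mh" and a: "a \<in> x m"
  have "mneg Mh x m = ng ` coset M a (Q m)" using compl_level_eq[OF x a] by (simp add: compl_ops)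
  also have "\<dots> = coset M (ng a) (Q m)" by (rule coset_neg[OF Q_submodule compl_level_closed[OF x a]])
  finally show ?thesis .
qed

lemma compl_zero_level: "mzero Mh m = coset M z0 (Q m)"
  using coset_zero[OF Q_submodule[of m]] by (simp add: compl_ops)

lemma coset_Q_self: "a \<in> C \<Longrightarrow> a \<in> coset M a (Q m)"
  using coset_self[OF Q_submodule] by blast

lemma cemb_level: "cemb s M a m = coset M a (Q m)"
  by (simp add: cemb_def)

lemma cemb_closed: "a \<in> C \<Longrightarrow> cemb s M a \<in> carrier Mh"
  unfolding compl_carrier_iff cemb_def
  using coset_mono[OF Q_mono] by (auto simp: le_Suc_eq)

lemma compl_zero_closed: "mzero Mh \<in> carrier Mh"
  unfolding compl_carrier_iff
proof (intro conjI allI)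
  fix m show "\<exists>a\<in>C. mzero Mh m = coset M a (Q m)" using compl_zero_level zero_closed by blast
  show "mzero Mh (Suc m) \<subseteq> mzero Mh m" using Q_mono[of m "Suc m"] by (simp add: compl_ops)
qed

lemma compl_add_closed: "x \<in> carrier Mh \<Longrightarrow> y \<in> carrier Mh \<Longrightarrow> madd Mh x y \<in> carrier Mh"
proof -
  assume x: "x \<in> carrier Mh" and y: "y \<in> carrier Mh"
  have "\<forall>m. \<exists>a\<in>C. madd Mh x y m = coset M a (Q m)"
  proof
    fix m
    obtain a b where "a \<in> C" "a \<in> x m" "b \<in> C" "b \<in> y m" using compl_level_nonempty x y by metis
    then show "\<exists>a\<in>C. madd Mh x y m = coset M a (Q m)" using compl_add_level[OF x y] by auto
  qed
  moreover have "\<forall>m. madd Mh x y (Suc m) \<subseteq> madd Mh x y m"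
  proof
    fix m
    have "x (Suc m) \<subseteq> x m" "y (Suc m) \<subseteq> y m" using x y unfolding compl_carrier_iff by blast+
    then show "madd Mh x y (Suc m) \<subseteq> madd Mh x y m" unfolding compl_ops by blast
  qed
  ultimately show ?thesis unfolding compl_carrier_iff by blast
qed

lemma compl_neg_closed: "x \<in> carrier Mh \<Longrightarrow> mneg Mh x \<in> carrier Mh"
proof -
  assume x: "x \<in> carrier Mh"
  have "\<forall>m. \<exists>a\<in>C. mneg Mh x m = coset M a (Q m)"
  proof
    fix m
    obtain a where "a \<in> C" "a \<in> x m" using compl_level_nonempty x by metis
    then show "\<exists>a\<in>C. mneg Mh x m = coset M a (Q m)" using compl_neg_level[OF x] by auto
  qed
  moreover have "\<forall>m. mneg Mh x (Suc m) \<subseteq> mneg Mh x m"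
  proof
    fix m
    have "x (Suc m) \<subseteq> x m" using x unfolding compl_carrier_iff by blast
    then show "mneg Mh x (Suc m) \<subseteq> mneg Mh x m" unfolding compl_ops by blast
  qed
  ultimately show ?thesis unfolding compl_carrier_iff by blast
qed

lemma compl_smult_closed: "x \<in> carrier Mh \<Longrightarrow> msmult Mh r x \<in> carrier Mh"
proof -
  assume x: "x \<in> carrier Mh"
  have "\<forall>m. \<exists>a\<in>C. msmult Mh r x m = coset M a (Q m)"
  proof
    fix m
    obtain a where "a \<in> C" "a \<in> x m" using compl_level_nonempty x by metis
    then show "\<exists>a\<in>C. msmult Mh r x m = coset M a (Q m)" using compl_smult_level[OF x] by auto
  qed
  moreover have "\<forall>m. msmult Mh r x (Suc m) \<subseteq> msmult Mh r x m"
  proof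
    fix m
    have "x (Suc m) \<subseteq> x m" using x unfolding compl_carrier_iff by blast
    moreover have "Q (Suc m) \<subseteq> Q m" using Q_mono by simp
    ultimately show "msmult Mh r x (Suc m) \<subseteq> msmult Mh r x m" unfolding compl_ops by blast
  qed
  ultimately show ?thesis unfolding compl_carrier_iff by blast
qed

lemma compl_add_assoc:
  assumes x: "x \<in> carrier Mh" and y: "y \<in> carrier Mh" and z: "z \<in> carrier Mh"
  shows "madd Mh (madd Mh x y) z = madd Mh x (madd Mh y z)"
proof
  fix m
  obtain a b c where a: "a \<in> x m" and b: "b \<in> y m" and c: "c \<in> z m"
    using compl_level_nonempty x y z by metis
  then have "a \<oplus> b \<in> madd Mh x y m" "b \<oplus> c \<in> madd Mh y z m"
    by (auto simp: compl_ops)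
  then show "madd Mh (madd Mh x y) z m = madd Mh x (madd Mh y z) m"
    using compl_add_level[OF compl_add_closed[OF x y] z _ c] compl_add_level[OF x compl_add_closed[OF y z] a]
      compl_level_closed a b c x y z a_assoc by simp
qed

lemma compl_add_commute:
  assumes x: "x \<in> carrier Mh" and y: "y \<in> carrier Mh"
  shows "madd Mh x y = madd Mh y x"
proof
  fix m
  obtain a b where a: "a \<in> x m" and b: "b \<in> y m" using compl_level_nonempty x y by metis
  then show "madd Mh x y m = madd Mh y x m"
    using compl_add_level[OF x y a b] compl_add_level[OF y x b a] compl_level_closed x y a_comm by simp
qed

lemma compl_zero_add:
  assumes x: "x \<in> carrier Mh"
  shows "madd Mh (mzero Mh) x = x"
proof
  fix m
  obtain a where "a \<in> x m" using compl_level_nonempty x by metis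
  then show "madd Mh (mzero Mh) x m = x m"
    using compl_add_level[OF compl_zero_closed x, of z0 m a] compl_level_eq[OF x] compl_level_closed[OF x]
      compl_zero_level coset_Q_self by simp
qed

lemma compl_neg_add:
  assumes x: "x \<in> carrier Mh"
  shows "madd Mh (mneg Mh x) x = mzero Mh"
proof
  fix m
  obtain a where a: "a \<in> x m" using compl_level_nonempty x by metis
  then have "ng a \<in> mneg Mh x m" by (simp add: compl_ops)
  then show "madd Mh (mneg Mh x) x m = mzero Mh m"
    using compl_add_level[OF compl_neg_closed[OF x] x _ a] compl_level_closed[OF x a] compl_zero_level by simp
qed

lemma compl_smult_add_right:
  assumes x: "x \<in> carrier Mh" and y: "y \<in> carrier Mh"
  shows "msmult Mh r (madd Mh x y) = madd Mh (msmult Mh r x) (msmult Mh r y)"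
proof
  fix m
  obtain a b where a: "a \<in> x m" and b: "b \<in> y m" using compl_level_nonempty x y by metis
  then have "a \<oplus> b \<in> madd Mh x y m" "r \<odot> a \<in> msmult Mh r x m" "r \<odot> b \<in> msmult Mh r y m"
    using compl_smult_level x y compl_level_closed coset_Q_self by (auto simp: compl_ops)
  then show "msmult Mh r (madd Mh x y) m = madd Mh (msmult Mh r x) (msmult Mh r y) m"
    using compl_smult_level[OF compl_add_closed[OF x y]] compl_add_level[OF compl_smult_closed[OF x] compl_smult_closed[OF y]]
      compl_level_closed[OF x a] compl_level_closed[OF y b] smult_r_distr by simp
qed

lemma compl_smult_add_left:
  assumes x: "x \<in> carrier Mh"
  shows "msmult Mh (r + t) x = madd Mh (msmult Mh r x) (msmult Mh t x)"
proof
  fix m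
  obtain a where a: "a \<in> x m" using compl_level_nonempty x by metis
  then have "r \<odot> a \<in> msmult Mh r x m" "t \<odot> a \<in> msmult Mh t x m"
    using compl_smult_level[OF x] compl_level_closed[OF x] coset_Q_self by auto
  then show "msmult Mh (r + t) x m = madd Mh (msmult Mh r x) (msmult Mh t x) m"
    using compl_add_level[OF compl_smult_closed[OF x] compl_smult_closed[OF x]]
      compl_smult_level[OF x a] compl_level_closed[OF x a] smult_l_distr by simp
qed

lemma compl_smult_smult:
  assumes x: "x \<in> carrier Mh"
  shows "msmult Mh (r * t) x = msmult Mh r (msmult Mh t x)"
proof
  fix m
  obtain a where a: "a \<in> x m" using compl_level_nonempty x by metis
  then have "t \<odot> a \<in> msmult Mh t x m"
    using compl_smult_level[OF x] compl_level_closed[OF x] coset_Q_self by auto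
  then show "msmult Mh (r * t) x m = msmult Mh r (msmult Mh t x) m"
    using compl_smult_level[OF compl_smult_closed[OF x]] compl_smult_level[OF x a]
      compl_level_closed[OF x a] smult_assoc by simp
qed

lemma compl_smult_one:
  assumes x: "x \<in> carrier Mh"
  shows "msmult Mh 1 x = x"
proof
  fix m
  obtain a where "a \<in> x m" using compl_level_nonempty x by metis
  then show "msmult Mh 1 x m = x m"
    using compl_smult_level compl_level_eq compl_level_closed x by simp
qed

lemma is_rmod_completion: "is_rmod Mh"
  unfolding is_rmod_def
proof (intro conjI ballI allI)
  show "madd Mh x y = madd Mh y x" if "x \<in> carrier Mh" "y \<in> carrier Mh" for x y
    using that by (rule compl_add_commute)
qed (simp_all add: compl_zero_closed compl_add_closed compl_neg_closed compl_smult_closed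
    compl_add_assoc compl_zero_add compl_neg_add compl_smult_add_right compl_smult_add_left
    compl_smult_smult compl_smult_one)

lemma compl_add_qmul_level:
  assumes u: "u \<in> carrier Mh" and z: "z \<in> carrier Mh"
  shows "madd Mh u (msmult Mh (qmul s n) z) n = u n"
proof -
  obtain a c where a: "a \<in> u n" and c: "c \<in> z n" using compl_level_nonempty u z by metis
  have aC: "a \<in> C" and cC: "c \<in> C" using compl_level_closed u z a c by auto
  have "qmul s n \<odot> c \<in> msmult Mh (qmul s n) z n"
    using compl_smult_level[OF z c] coset_Q_self cC by simp
  then have "madd Mh u (msmult Mh (qmul s n) z) n = coset M (a \<oplus> qmul s n \<odot> c) (Q n)"
    using compl_add_level[OF u compl_smult_closed[OF z] a] by blast
  also have "\<dots> = coset M a (Q n)" using coset_absorb aC cC qmul_in_Q by blast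
  also have "\<dots> = u n" using compl_level_eq[OF u a] by simp
  finally show ?thesis .
qed

definition qpure :: "'m set \<Rightarrow> bool" where
  "qpure E \<longleftrightarrow> (\<forall>m. \<forall>a\<in>E. a \<in> Q m \<longrightarrow> (\<exists>c\<in>E. a = qmul s m \<odot> c))"

lemma qpureD: "qpure E \<Longrightarrow> a \<in> E \<Longrightarrow> a \<in> Q m \<Longrightarrow> \<exists>c\<in>E. a = qmul s m \<odot> c"
  by (simp add: qpure_def)

definition compl_closure :: "'m set \<Rightarrow> (nat \<Rightarrow> 'm set) set" where
  "compl_closure E = {y \<in> carrier Mh. \<forall>m. \<exists>a\<in>E. a \<in> y m}"

lemma compl_closure_subset: "compl_closure E \<subseteq> carrier Mh"
  by (auto simp: compl_closure_def)

lemma compl_closure_add: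
  assumes E: "submodule M E" and x: "x \<in> compl_closure E" and y: "y \<in> compl_closure E"
  shows "madd Mh x y \<in> compl_closure E"
proof -
  have "\<exists>c\<in>E. c \<in> madd Mh x y m" for m
  proof -
    obtain a b where "a \<in> E" "a \<in> x m" "b \<in> E" "b \<in> y m"
      using x y unfolding compl_closure_def by blast
    then show ?thesis using submoduleD(3)[OF E] by (auto simp: compl_ops)
  qed
  then show ?thesis using compl_add_closed x y by (auto simp: compl_closure_def)
qed

lemma compl_closure_neg:
  assumes E: "submodule M E" and x: "x \<in> compl_closure E"
  shows "mneg Mh x \<in> compl_closure E"
proof -
  have "\<exists>c\<in>E. c \<in> mneg Mh x m" for m
  proof -
    obtain a where "a \<in> E" "a \<in> x m" using x by (auto simp: compl_closure_def)
    then show ?thesis using submoduleD(4)[OF E] by (auto simp: compl_ops)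
  qed
  then show ?thesis using compl_neg_closed x by (auto simp: compl_closure_def)
qed

lemma compl_closure_smult:
  assumes E: "submodule M E" and x: "x \<in> compl_closure E"
  shows "msmult Mh r x \<in> compl_closure E"
proof -
  have "\<exists>c\<in>E. c \<in> msmult Mh r x m" for m
  proof -
    obtain a where a: "a \<in> E" "a \<in> x m" using x by (auto simp: compl_closure_def)
    have "r \<odot> a \<oplus> z0 \<in> msmult Mh r x m"
      using a submoduleD(2)[OF Q_submodule] by (auto simp: compl_ops)
    moreover have "r \<odot> a \<oplus> z0 = r \<odot> a" using a submoduleD(1)[OF E] by auto
    ultimately show ?thesis using submoduleD(5)[OF E] a by metis
  qed
  then show ?thesis using compl_smult_closed x by (auto simp: compl_closure_def)
qed

lemma cemb_in_compl_closure:
  assumes "submodule M E" "e \<in> E"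
  shows "cemb s M e \<in> compl_closure E"
proof -
  have "e \<in> C" using assms submoduleD(1) by blast
  then show ?thesis
    using cemb_closed coset_Q_self assms(2) unfolding compl_closure_def cemb_level by blast
qed

lemma compl_closure_submodule:
  assumes E: "submodule M E"
  shows "submodule Mh (compl_closure E)"
proof -
  have "mzero Mh = cemb s M z0"
    using coset_zero[OF Q_submodule] by (simp add: fun_eq_iff compl_ops cemb_level)
  then have "mzero Mh \<in> compl_closure E"
    using cemb_in_compl_closure[OF E submoduleD(2)[OF E]] by simp
  then show ?thesis
    using compl_closure_add[OF E] compl_closure_neg[OF E] compl_closure_smult[OF E] compl_closure_subset
    unfolding submodule_def by blast
qed

lemma sub_completion_subset_compl_closure:
  assumes E: "submodule M E"
  shows "sub_completion s M E \<subseteq> compl_closure E"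
proof
  have EC: "E \<subseteq> C" using submoduleD(1)[OF E] .
  have QE: "qsub s (submod M E) m \<subseteq> Q m" "z0 \<in> qsub s (submod M E) m" for m
    using EC submoduleD(2)[OF E] by (auto simp: qsub_def image_iff intro!: bexI[of _ z0])
  fix y assume "y \<in> sub_completion s M E"
  then obtain z where z: "z \<in> carrier (completion s (submod M E))" and y: "y = compl_incl s M z"
    by (auto simp: sub_completion_def)
  have ym: "\<exists>a\<in>E. y m = coset M a (Q m)" for m
  proof -
    have "\<forall>m. \<exists>a\<in>E. z m = coset M a (qsub s (submod M E) m)"
      using z by (simp add: completion_def coset_def)
    then obtain a where a: "a \<in> E" "z m = coset M a (qsub s (submod M E) m)" by blast
    have "y m = {u \<oplus> b |u b. u \<in> coset M a (qsub s (submod M E) m) \<and> b \<in> Q m}"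
      using y a by (simp add: compl_incl_def)
    also have "\<dots> = coset M a (Q m)" using coset_sum_submodule[OF Q_submodule QE] a EC by blast
    finally show ?thesis using a by blast
  qed
  have "y \<in> carrier Mh"
    unfolding compl_carrier_iff
  proof (intro conjI allI)
    fix m show "\<exists>a\<in>C. y m = coset M a (Q m)" using ym EC by blast
    have "z (Suc m) \<subseteq> z m" "Q (Suc m) \<subseteq> Q m" using z Q_mono by (auto simp: completion_def)
    then show "y (Suc m) \<subseteq> y m" unfolding y compl_incl_def by blast
  qed
  moreover have "\<exists>a\<in>E. a \<in> y m" for m using ym[of m] coset_Q_self EC by blast
  ultimately show "y \<in> compl_closure E" by (simp add: compl_closure_def)
qed

lemma coset_qpure:
  assumes E: "submodule M E" "qpure E" and a: "a \<in> E"
  shows "coset M a (qsub s (submod M E) m) = E \<inter> coset M a (Q m)"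
proof
  have EC: "E \<subseteq> C" using submoduleD(1)[OF E(1)] .
  show "coset M a (qsub s (submod M E) m) \<subseteq> E \<inter> coset M a (Q m)"
    using a EC submoduleD(3,5)[OF E(1)] by (auto simp: coset_def qsub_def)
  show "E \<inter> coset M a (Q m) \<subseteq> coset M a (qsub s (submod M E) m)"
  proof
    fix x assume x: "x \<in> E \<inter> coset M a (Q m)"
    then obtain u where u: "u \<in> Q m" "x = a \<oplus> u" by (auto simp: coset_def)
    have "u = ng a \<oplus> x" using u a EC Q_closed minus_add_cancel by auto
    then have "u \<in> E" using submoduleD(3,4)[OF E(1)] a x by simp
    then obtain e where "e \<in> E" "u = qmul s m \<odot> e" using qpureD[OF E(2)] u by blast
    then show "x \<in> coset M a (qsub s (submod M E) m)" using u by (auto simp: coset_def qsub_def)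
  qed
qed

lemma compl_closure_subset_sub_completion:
  assumes E: "submodule M E" "qpure E"
  shows "compl_closure E \<subseteq> sub_completion s M E"
proof
  have EC: "E \<subseteq> C" using submoduleD(1)[OF E(1)] .
  have QE: "qsub s (submod M E) m \<subseteq> Q m" "z0 \<in> qsub s (submod M E) m" for m
    using EC submoduleD(2)[OF E(1)] by (auto simp: qsub_def image_iff intro!: bexI[of _ z0])
  fix y assume "y \<in> compl_closure E"
  then have yc: "y \<in> carrier Mh" and "\<forall>m. \<exists>a\<in>E. a \<in> y m" by (auto simp: compl_closure_def)
  then obtain a where a: "a m \<in> E" "a m \<in> y m" for m by metis
  have z: "E \<inter> y m = coset M (a m) (qsub s (submod M E) m)" for m
    using coset_qpure[OF E a(1)] compl_level_eq[OF yc a(2)] by simp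
  have "coset (submod M E) = coset M" by (simp add: coset_def fun_eq_iff)
  then have "\<forall>m. \<exists>b\<in>carrier (submod M E). E \<inter> y m = coset (submod M E) b (qsub s (submod M E) m)"
    using z a(1) by auto
  moreover have "\<forall>m. E \<inter> y (Suc m) \<subseteq> E \<inter> y m" using yc compl_carrier_iff by blast
  ultimately have "(\<lambda>m. E \<inter> y m) \<in> carrier (completion s (submod M E))"
    unfolding completion_def rmod.select_convs mem_Collect_eq by blast
  moreover have "compl_incl s M (\<lambda>m. E \<inter> y m) = y"
  proof
    fix m
    have "compl_incl s M (\<lambda>m. E \<inter> y m) m = {u \<oplus> b |u b. u \<in> coset M (a m) (qsub s (submod M E) m) \<and> b \<in> Q m}"
      by (simp add: compl_incl_def z)
    also have "\<dots> = coset M (a m) (Q m)"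
      using coset_sum_submodule[OF Q_submodule QE] EC a(1) by blast
    also have "\<dots> = y m" using compl_level_eq[OF yc a(2)] by simp
    finally show "compl_incl s M (\<lambda>m. E \<inter> y m) m = y m" .
  qed
  ultimately show "y \<in> sub_completion s M E" unfolding sub_completion_def by (metis image_eqI)
qed

lemma sub_completion_eq_compl_closure:
  "submodule M E \<Longrightarrow> qpure E \<Longrightarrow> sub_completion s M E = compl_closure E"
  using sub_completion_subset_compl_closure compl_closure_subset_sub_completion by blast

definition q_torsion_free :: bool where
  "q_torsion_free \<longleftrightarrow> (\<forall>n. \<forall>x\<in>C. qmul s n \<odot> x = z0 \<longrightarrow> x = z0)"

lemma qmul_cancel_coset:
  assumes tf: "q_torsion_free" and b: "b \<in> C" "b' \<in> C"
    and dvd: "qmul s n * qmul s k dvd qmul s N"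
    and eq: "qmul s n \<odot> b' \<in> coset M (qmul s n \<odot> b) (Q N)"
  shows "b' \<in> coset M b (Q k)"
proof -
  obtain c where c: "c \<in> C" "qmul s n \<odot> b' = qmul s n \<odot> b \<oplus> qmul s N \<odot> c"
    using eq by (auto simp: coset_def qsub_def)
  obtain d where d: "qmul s N = qmul s n * (qmul s k * d)" using dvd by (auto simp: dvd_def mult.assoc)
  define v where "v = qmul s k \<odot> (d \<odot> c)"
  have v: "v \<in> C" "v \<in> Q k" using c by (simp_all add: v_def qsub_def)
  have "qmul s n \<odot> b' = qmul s n \<odot> (b \<oplus> v)"
    using c b v d by (simp add: v_def smult_r_distr smult_assoc)
  then have "qmul s n \<odot> (ng (b \<oplus> v) \<oplus> b') = z0"
    using b v by (simp add: smult_r_distr smult_r_minus)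
  then have "ng (b \<oplus> v) \<oplus> b' = z0" using tf b v by (simp add: q_torsion_free_def)
  then have "b' = b \<oplus> v" using b v by (metis add_closed neg_closed minus_minus minus_equality)
  then show ?thesis using v(2) by (auto simp: coset_def)
qed

lemma compl_level_qmul_cancel:
  assumes tf: "q_torsion_free" and t: "t \<in> carrier Mh" and b: "b \<in> C" "b' \<in> C"
    and dvd: "qmul s n * qmul s k dvd qmul s N" "qmul s n * qmul s k dvd qmul s N'"
    and lev: "qmul s n \<odot> b \<in> t N" "qmul s n \<odot> b' \<in> t N'"
  shows "b' \<in> coset M b (Q k)"
proof -
  let ?m = "min N N'"
  have dvd_m: "qmul s n * qmul s k dvd qmul s ?m" using dvd by (simp add: min_def)
  have "t N \<subseteq> t ?m" "t N' \<subseteq> t ?m" using compl_level_mono[OF t] by simp_all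
  then have "qmul s n \<odot> b \<in> t ?m" "qmul s n \<odot> b' \<in> t ?m" using lev by blast+
  then have "qmul s n \<odot> b' \<in> coset M (qmul s n \<odot> b) (Q ?m)" using compl_level_eq[OF t] by blast
  then show ?thesis by (rule qmul_cancel_coset[OF tf b dvd_m])
qed

lemma coset_seq_in_completion:
  assumes "\<And>k. c k \<in> C" "\<And>k. c (Suc k) \<in> coset M (c k) (Q k)"
  shows "(\<lambda>k. coset M (c k) (Q k)) \<in> carrier Mh"
  unfolding compl_carrier_iff
proof (intro conjI allI)
  fix k
  show "\<exists>a\<in>C. coset M (c k) (Q k) = coset M a (Q k)" using assms(1) by blast
  have "coset M (c (Suc k)) (Q (Suc k)) \<subseteq> coset M (c (Suc k)) (Q k)"
    by (rule coset_mono[OF Q_mono]) simp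
  also have "\<dots> = coset M (c k) (Q k)" by (rule coset_eq[OF Q_submodule assms])
  finally show "coset M (c (Suc k)) (Q (Suc k)) \<subseteq> coset M (c k) (Q k)" .
qed

text \<open>Division by \<open>q\<^sub>n\<close> is done levelwise: at level \<open>k\<close>, divide a representative at a level \<open>N\<close> with
  \<open>q\<^sub>n q\<^sub>k | q\<^sub>N\<close>; torsion-freeness makes the quotients compatible.\<close>
lemma compl_closure_divide:
  assumes mc: "mult_closed_seq s" and tf: "q_torsion_free"
    and E: "submodule M E" "qpure E"
    and t: "t \<in> compl_closure E" and tn: "t n = Q n"
  shows "\<exists>z\<in>compl_closure E. t = msmult Mh (qmul s n) z"
proof -
  have tc: "t \<in> carrier Mh" using t by (simp add: compl_closure_def)
  define N where "N k = (SOME N. N \<ge> max n k \<and> qmul s n * qmul s k dvd qmul s N)" for k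
  have "N k \<ge> max n k \<and> qmul s n * qmul s k dvd qmul s (N k)" for k
    unfolding N_def by (rule someI_ex) (rule qmul_cofinal[OF mc])
  then have N: "N k \<ge> max n k" "qmul s n * qmul s k dvd qmul s (N k)" for k
    by auto
  have "\<exists>b. b \<in> E \<and> qmul s n \<odot> b \<in> t (N k)" for k
  proof -
    obtain a where a: "a \<in> E" "a \<in> t (N k)" using t by (auto simp: compl_closure_def)
    have "a \<in> Q n" using a(2) compl_level_mono[OF tc, of n "N k"] tn N(1)[of k] by auto
    then obtain c where "c \<in> E" "a = qmul s n \<odot> c" using qpureD[OF E(2) a(1)] by blast
    then show ?thesis using a(2) by blast
  qed
  then obtain b where b: "b k \<in> E" "qmul s n \<odot> b k \<in> t (N k)" for k by metis
  have bC: "b k \<in> C" for k using b(1) submoduleD(1)[OF E(1)] by auto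
  have bt: "qmul s n \<odot> b k \<in> t k" for k
    using b(2) compl_level_mono[OF tc, of k "N k"] N(1)[of k] by auto
  have "b (Suc k) \<in> coset M (b k) (Q k)" for k
  proof (rule compl_level_qmul_cancel[OF tf tc bC[of k] bC[of "Suc k"] N(2)[of k] _ b(2)[of k] b(2)[of "Suc k"]])
    have "qmul s k dvd qmul s (Suc k)" by (simp add: qmul_Suc)
    then show "qmul s n * qmul s k dvd qmul s (N (Suc k))"
      using N(2)[of "Suc k"] by (meson dvd_trans mult_dvd_mono dvd_refl)
  qed
  then have zc: "(\<lambda>k. coset M (b k) (Q k)) \<in> carrier Mh"
    by (rule coset_seq_in_completion[OF bC])
  have "t = msmult Mh (qmul s n) (\<lambda>k. coset M (b k) (Q k))"
  proof
    fix k
    show "t k = msmult Mh (qmul s n) (\<lambda>k. coset M (b k) (Q k)) k"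
      using compl_smult_level[OF zc coset_Q_self[OF bC]] compl_level_eq[OF tc bt] by simp
  qed
  moreover have "(\<lambda>k. coset M (b k) (Q k)) \<in> compl_closure E"
    using zc b(1) coset_Q_self[OF bC] by (auto simp: compl_closure_def)
  ultimately show ?thesis by blast
qed

lemma direct_summand_qpure:
  assumes ds: "direct_summand M E"
  shows "qpure E"
  unfolding qpure_def
proof (intro allI ballI impI)
  fix m a assume a: "a \<in> E" "a \<in> Q m"
  obtain D where E: "submodule M E" and D: "submodule M D" "E \<inter> D = {z0}"
    and CD: "C = {x \<oplus> y |x y. x \<in> E \<and> y \<in> D}" using ds by (auto simp: direct_summand_def)
  obtain c where c: "c \<in> C" "a = qmul s m \<odot> c" using a by (auto simp: qsub_def)
  obtain c1 c2 where cc: "c1 \<in> E" "c2 \<in> D" "c = c1 \<oplus> c2" using c CD by blast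
  have cC: "c1 \<in> C" "c2 \<in> C" using cc submoduleD(1)[OF E] submoduleD(1)[OF D(1)] by auto
  have a2: "a = qmul s m \<odot> c1 \<oplus> qmul s m \<odot> c2" using c cc cC by (simp add: smult_r_distr)
  have "qmul s m \<odot> c2 = ng (qmul s m \<odot> c1) \<oplus> a" using a2 cC minus_add_cancel by simp
  then have "qmul s m \<odot> c2 \<in> E" using submoduleD(3,4,5)[OF E] cc a by simp
  moreover have "qmul s m \<odot> c2 \<in> D" using submoduleD(5)[OF D(1)] cc by simp
  ultimately have "qmul s m \<odot> c2 = z0" using D(2) by blast
  then show "\<exists>c\<in>E. a = qmul s m \<odot> c" using a2 cC cc by auto
qed

lemma rmodule_completion: "rmodule Mh"
  by (rule rmodule.intro) (rule is_rmod_completion)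

lemma cemb_rhom: "rhom M Mh (cemb s M)"
  unfolding rhom_def
proof (intro conjI ballI allI)
  fix a b assume a: "a \<in> C" and b: "b \<in> C"
  show "cemb s M (a \<oplus> b) = madd Mh (cemb s M a) (cemb s M b)"
  proof
    fix m
    have "a \<in> cemb s M a m" "b \<in> cemb s M b m"
      using coset_Q_self a b by (simp_all add: cemb_level)
    then show "cemb s M (a \<oplus> b) m = madd Mh (cemb s M a) (cemb s M b) m"
      using compl_add_level[OF cemb_closed[OF a] cemb_closed[OF b]] by (simp add: cemb_level)
  qed
next
  fix r a assume a: "a \<in> C"
  show "cemb s M (r \<odot> a) = msmult Mh r (cemb s M a)"
  proof
    fix m
    have "a \<in> cemb s M a m" using coset_Q_self a by (simp add: cemb_level)
    then show "cemb s M (r \<odot> a) m = msmult Mh r (cemb s M a) m"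
      using compl_smult_level[OF cemb_closed[OF a]] by (simp add: cemb_level)
  qed
qed (rule cemb_closed)

lemma compl_closure_dense:
  assumes mc: "mult_closed_seq s"
    and tf: "q_torsion_free"
    and E: "submodule M E" and pE: "qpure E" and y: "y \<in> compl_closure E"
  shows "\<exists>e\<in>E. \<exists>z\<in>compl_closure E. y = madd Mh (cemb s M e) (msmult Mh (qmul s n) z)"
proof -
  obtain e where e: "e \<in> E" "e \<in> y n" using y by (auto simp: compl_closure_def)
  have eC: "e \<in> C" using e submoduleD(1)[OF E] by auto
  have ce: "cemb s M e \<in> compl_closure E" and yC: "y \<in> carrier Mh"
    using cemb_in_compl_closure[OF E e(1)] y compl_closure_subset by auto
  define t where "t = madd Mh y (mneg Mh (cemb s M e))"
  have t: "t \<in> compl_closure E"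
    unfolding t_def using compl_closure_add[OF E] compl_closure_neg[OF E] y ce by blast
  have "ng e \<in> mneg Mh (cemb s M e) n"
    using coset_Q_self eC by (simp add: compl_ops cemb_level)
  then have "t n = coset M (e \<oplus> ng e) (Q n)"
    unfolding t_def using compl_add_level[OF yC compl_neg_closed[OF cemb_closed[OF eC]] e(2)] by blast
  then have "t n = Q n" using coset_zero[OF Q_submodule] eC by simp
  then obtain z where z: "z \<in> compl_closure E" "t = msmult Mh (qmul s n) z"
    using compl_closure_divide[OF mc tf E pE t] by blast
  have "y = madd Mh (cemb s M e) t"
    unfolding t_def using rmodule.add_diff_cancel[OF rmodule_completion] yC cemb_closed[OF eC] by simp
  then show ?thesis using e(1) z by blast
qed

end

lemma freemod_q_torsion_free:
  assumes "S_torsion_free_ring s"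
  shows "s_adic_module.q_torsion_free (freemod :: ('r::comm_ring_1, 'k list \<Rightarrow> 'r) rmod) s"
proof -
  interpret F: s_adic_module "freemod :: ('r, 'k list \<Rightarrow> 'r) rmod" s
    by unfold_locales (rule freemod_is_rmod)
  show ?thesis
    using qmul_torsion_free[OF assms] by (auto simp: F.q_torsion_free_def freemod_simps fun_eq_iff)
qed

section \<open>Extending homomorphisms to the completion\<close>

locale dense_submodule = rmodule M for M :: "('r::comm_ring_1, 'p) rmod" +
  fixes s :: "nat \<Rightarrow> 'r" and X Dom :: "'p set"
  assumes X: "submodule M X"
    and Dom: "submodule M Dom" "Dom \<subseteq> X"
    and mult_closed: "mult_closed_seq s"
    and pure: "pure s (submod M X) Dom"
    and dense: "\<And>x n. x \<in> X \<Longrightarrow> \<exists>d\<in>Dom. \<exists>w\<in>X. x = madd M d (msmult M (qmul s n) w)"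
begin

definition approx :: "nat \<Rightarrow> 'p \<Rightarrow> 'p \<Rightarrow> bool" where
  "approx n x d \<longleftrightarrow> d \<in> Dom \<and> (\<exists>w\<in>X. x = d \<oplus> qmul s n \<odot> w)"

lemma approx_exists: "x \<in> X \<Longrightarrow> \<exists>d. approx n x d"
  using dense[of x n] unfolding approx_def by blast

lemma approx_in_Dom: "approx n x d \<Longrightarrow> d \<in> Dom"
  by (simp add: approx_def)

lemma approx_refl: "d \<in> Dom \<Longrightarrow> approx n d d"
  using Dom submoduleD(1,2)[OF X] unfolding approx_def by (intro conjI bexI[of _ z0]) auto

lemma approx_Suc: "approx (Suc n) x d \<Longrightarrow> approx n x d"
proof -
  assume "approx (Suc n) x d"
  then obtain w where d: "d \<in> Dom" and w: "w \<in> X" and x: "x = d \<oplus> qmul s (Suc n) \<odot> w"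
    by (auto simp: approx_def)
  have "qmul s (Suc n) \<odot> w = qmul s n \<odot> (s n \<odot> w)"
    using w submoduleD(1)[OF X] by (auto simp: qmul_Suc smult_assoc)
  then show ?thesis
    unfolding approx_def using d w x submoduleD(5)[OF X] by metis
qed

lemma approx_add: "approx n x d \<Longrightarrow> approx n y e \<Longrightarrow> approx n (x \<oplus> y) (d \<oplus> e)"
proof -
  assume "approx n x d" "approx n y e"
  then obtain w w' where d: "d \<in> Dom" "e \<in> Dom" and w: "w \<in> X" "w' \<in> X"
    and x: "x = d \<oplus> qmul s n \<odot> w" and y: "y = e \<oplus> qmul s n \<odot> w'"
    by (auto simp: approx_def)
  have c: "d \<in> C" "e \<in> C" "w \<in> C" "w' \<in> C"
    using d w Dom submoduleD(1)[OF X] by auto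
  have "x \<oplus> y = (d \<oplus> e) \<oplus> qmul s n \<odot> (w \<oplus> w')"
    unfolding x y using c by (simp add: a_add_swap smult_r_distr)
  then show ?thesis
    unfolding approx_def using d w submoduleD(3)[OF Dom(1)] submoduleD(3)[OF X] by blast
qed

lemma approx_smult: "approx n x d \<Longrightarrow> approx n (r \<odot> x) (r \<odot> d)"
proof -
  assume "approx n x d"
  then obtain w where d: "d \<in> Dom" and w: "w \<in> X" and x: "x = d \<oplus> qmul s n \<odot> w"
    by (auto simp: approx_def)
  have c: "d \<in> C" "w \<in> C" using d w Dom submoduleD(1)[OF X] by auto
  have "r \<odot> x = r \<odot> d \<oplus> qmul s n \<odot> (r \<odot> w)"
    unfolding x using c by (simp add: smult_r_distr smult_assoc[symmetric] mult.commute)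
  then show ?thesis
    unfolding approx_def using d w submoduleD(5)[OF Dom(1)] submoduleD(5)[OF X] by blast
qed

text \<open>Two approximations of the same element differ by a \<open>q\<^sub>n\<close>-multiple in \<open>X\<close>, hence, by purity,
  by a \<open>q\<^sub>n\<close>-multiple in \<open>Dom\<close>.\<close>
lemma approx_diff:
  assumes "approx n x d" "approx n x d'"
  shows "\<exists>e\<in>Dom. d = d' \<oplus> qmul s n \<odot> e"
proof -
  obtain w w' where d: "d \<in> Dom" "d' \<in> Dom" and w: "w \<in> X" "w' \<in> X"
    and x: "x = d \<oplus> qmul s n \<odot> w" "x = d' \<oplus> qmul s n \<odot> w'"
    using assms by (auto simp: approx_def)
  have c: "d \<in> C" "d' \<in> C" "w \<in> C" "w' \<in> C"
    using d w Dom submoduleD(1)[OF X] by auto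
  have diff: "d \<oplus> ng d' = qmul s n \<odot> (w' \<oplus> ng w)"
    using diff_eq_smult_diff[OF c] x by simp
  have "w' \<oplus> ng w \<in> X" using w submoduleD(3,4)[OF X] by blast
  moreover have "d \<oplus> ng d' \<in> Dom" using d submoduleD(3,4)[OF Dom(1)] by blast
  ultimately obtain e where "e \<in> Dom" "d \<oplus> ng d' = qmul s n \<odot> e"
    using pure_qmul[OF mult_closed pure, of "w' \<oplus> ng w" n] diff by auto
  then show ?thesis using add_diff_cancel[OF c(2,1)] by metis
qed

context
  fixes N :: "('r, 'n) rmod" and f :: "'p \<Rightarrow> nat \<Rightarrow> 'n set"
  assumes N: "is_rmod N" and f: "rhom (submod M Dom) (completion s N) f"
begin

interpretation N: s_adic_module N s
  by unfold_locales (rule N)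

definition extension :: "'p \<Rightarrow> nat \<Rightarrow> 'n set" where
  "extension x = (\<lambda>n. f (SOME d. approx n x d) n)"

lemma extension_level:
  assumes "x \<in> X" "approx n x d"
  shows "extension x n = f d n"
proof -
  have "f d n = f d' n" if approx: "approx n x d" "approx n x d'" for d d'
  proof -
    obtain e where e: "e \<in> Dom" "d = d' \<oplus> qmul s n \<odot> e" using approx_diff[OF approx] by blast
    have d': "d' \<in> Dom" using approx approx_in_Dom by blast
    have "f d = madd N.Mh (f d') (msmult N.Mh (qmul s n) (f e))"
      using f e d' submoduleD(5)[OF Dom(1)] unfolding rhom_def by simp
    then show ?thesis
      using N.compl_add_qmul_level f e(1) d' unfolding rhom_def by simp
  qed
  then show ?thesis
    unfolding extension_def using someI_ex[OF approx_exists[OF assms(1)]] assms(2) by metis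
qed

lemma extension_agrees: "d \<in> Dom \<Longrightarrow> extension d = f d"
  using extension_level[OF _ approx_refl] Dom(2) by blast

lemma extension_closed: "x \<in> X \<Longrightarrow> extension x \<in> carrier N.Mh"
  unfolding N.compl_carrier_iff
proof (intro conjI allI)
  fix m assume x: "x \<in> X"
  obtain d where d: "approx m x d" using approx_exists[OF x] by blast
  obtain d' where d': "approx (Suc m) x d'" using approx_exists[OF x] by blast
  have "f d \<in> carrier N.Mh" "f d' \<in> carrier N.Mh"
    using f d d' approx_in_Dom unfolding rhom_def by auto
  then show "\<exists>a\<in>carrier N. extension x m = coset N a (N.Q m)"
    "extension x (Suc m) \<subseteq> extension x m"
    using extension_level[OF x d] extension_level[OF x d'] extension_level[OF x approx_Suc[OF d']]
    unfolding N.compl_carrier_iff by metis+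
qed

lemma extension_rhom: "rhom (submod M X) N.Mh extension"
  unfolding rhom_def submod_simps
proof (intro conjI ballI allI)
  fix x y assume x: "x \<in> X" and y: "y \<in> X"
  show "extension (x \<oplus> y) = madd N.Mh (extension x) (extension y)"
  proof
    fix n
    obtain d e where d: "approx n x d" and e: "approx n y e" using approx_exists x y by metis
    have "extension (x \<oplus> y) n = f (d \<oplus> e) n"
      using extension_level approx_add[OF d e] x y submoduleD(3)[OF X] by blast
    also have "\<dots> = madd N.Mh (f d) (f e) n"
      using f d e approx_in_Dom unfolding rhom_def by simp
    also have "\<dots> = madd N.Mh (extension x) (extension y) n"
      using extension_level[OF x d] extension_level[OF y e] by (simp add: N.compl_ops)
    finally show "extension (x \<oplus> y) n = madd N.Mh (extension x) (extension y) n" .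
  qed
  fix r
  show "extension (r \<odot> x) = msmult N.Mh r (extension x)"
  proof
    fix n
    obtain d where d: "approx n x d" using approx_exists x by metis
    have "extension (r \<odot> x) n = f (r \<odot> d) n"
      using extension_level approx_smult[OF d] x submoduleD(5)[OF X] by blast
    also have "\<dots> = msmult N.Mh r (f d) n"
      using f d approx_in_Dom unfolding rhom_def by simp
    also have "\<dots> = msmult N.Mh r (extension x) n"
      using extension_level[OF x d] by (simp add: N.compl_ops)
    finally show "extension (r \<odot> x) n = msmult N.Mh r (extension x) n" .
  qed
qed (rule extension_closed)

end

lemma extension_unique:
  assumes N: "is_rmod N"
    and g: "rhom (submod M X) (completion s N) g" "rhom (submod M X) (completion s N) g'"
    and agree: "\<forall>d\<in>Dom. g d = g' d" and x: "x \<in> X"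
  shows "g x = g' x"
proof
  interpret N: s_adic_module N s by unfold_locales (rule N)
  fix n
  obtain d where d: "approx n x d" using approx_exists x by blast
  then obtain w where dD: "d \<in> Dom" and w: "w \<in> X" and xd: "x = d \<oplus> qmul s n \<odot> w"
    by (auto simp: approx_def)
  have dX: "d \<in> X" "qmul s n \<odot> w \<in> X" using dD Dom(2) w submoduleD(5)[OF X] by auto
  have "h x n = h d n" if h: "rhom (submod M X) N.Mh h" for h
  proof -
    have "h x = madd N.Mh (h d) (msmult N.Mh (qmul s n) (h w))"
      using h dX w unfolding xd rhom_def by simp
    then show ?thesis using N.compl_add_qmul_level h dX w unfolding rhom_def by simp
  qed
  then show "g x n = g' x n" using g agree dD by metis
qed

lemma extension_prodmod_unique:
  assumes "is_rmod N1" "is_rmod N2"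
    and "rhom (submod M Dom) (prodmod (completion s N1) (completion s N2)) f"
  shows "\<exists>\<psi>. rhom (submod M X) (prodmod (completion s N1) (completion s N2)) \<psi> \<and> (\<forall>d\<in>Dom. \<psi> d = f d) \<and>
      (\<forall>\<psi>'. rhom (submod M X) (prodmod (completion s N1) (completion s N2)) \<psi>' \<and> (\<forall>d\<in>Dom. \<psi>' d = f d)
        \<longrightarrow> (\<forall>x\<in>X. \<psi>' x = \<psi> x))"
proof -
  have f: "rhom (submod M Dom) (completion s N1) (fst \<circ> f)"
    "rhom (submod M Dom) (completion s N2) (snd \<circ> f)"
    using assms(3) by (simp_all add: rhom_prodmod_iff)
  define \<psi> where "\<psi> x = (extension (fst \<circ> f) x, extension (snd \<circ> f) x)" for x
  have hom: "rhom (submod M X) (prodmod (completion s N1) (completion s N2)) \<psi>"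
    using extension_rhom[OF assms(1) f(1)] extension_rhom[OF assms(2) f(2)]
    by (simp add: rhom_prodmod_iff \<psi>_def comp_def)
  moreover have agree: "\<forall>d\<in>Dom. \<psi> d = f d"
    using extension_agrees[OF assms(1) f(1)] extension_agrees[OF assms(2) f(2)] by (simp add: \<psi>_def)
  moreover have "\<psi>' x = \<psi> x"
    if "rhom (submod M X) (prodmod (completion s N1) (completion s N2)) \<psi>'" "\<forall>d\<in>Dom. \<psi>' d = f d" "x \<in> X"
    for \<psi>' x
    using extension_unique[OF assms(1), of "fst \<circ> \<psi>'" "fst \<circ> \<psi>"]
      extension_unique[OF assms(2), of "snd \<circ> \<psi>'" "snd \<circ> \<psi>"] that hom agree
    by (simp add: rhom_prodmod_iff prod_eq_iff)
  ultimately show ?thesis by blast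
qed

end

lemma (in s_adic_module) compl_closure_times_dense:
  assumes mc: "mult_closed_seq s"
    and tf: "q_torsion_free"
    and E: "submodule M E" "qpure E"
    and B: "is_rmod B" "submodule B H'"
    and Dom: "submodule (prodmod Mh B) Dom" "Dom \<subseteq> compl_closure E \<times> H'" "snd ` Dom = H'"
    and E_Dom: "(\<lambda>e. (cemb s M e, mzero B)) ` E \<subseteq> Dom"
    and x: "x \<in> compl_closure E \<times> H'"
  shows "\<exists>d\<in>Dom. \<exists>w\<in>compl_closure E \<times> H'.
           x = madd (prodmod Mh B) d (msmult (prodmod Mh B) (qmul s n) w)"
proof -
  interpret Mh: rmodule Mh by (rule rmodule_completion)
  interpret B: rmodule B by (rule rmodule.intro) (rule B(1))
  obtain d0 where d0: "d0 \<in> Dom" "snd d0 = snd x" using x Dom(3) by force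
  have y: "fst x \<in> compl_closure E" "fst d0 \<in> compl_closure E" using x d0 Dom(2) by auto
  then have yC: "fst x \<in> carrier Mh" "fst d0 \<in> carrier Mh" using compl_closure_subset by auto
  have "madd Mh (fst x) (mneg Mh (fst d0)) \<in> compl_closure E"
    using compl_closure_add[OF E(1)] compl_closure_neg[OF E(1)] y by blast
  then obtain e z where e: "e \<in> E" and z: "z \<in> compl_closure E"
    and yz: "madd Mh (fst x) (mneg Mh (fst d0)) = madd Mh (cemb s M e) (msmult Mh (qmul s n) z)"
    using compl_closure_dense[OF mc tf E(1,2)] by blast
  have ceC: "cemb s M e \<in> carrier Mh" and zC: "z \<in> carrier Mh"
    using e z E(1) cemb_closed submoduleD(1) compl_closure_subset by blast+
  define d where "d = madd (prodmod Mh B) d0 (cemb s M e, mzero B)"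
  have dD: "d \<in> Dom"
    using E_Dom e d0(1) Dom(1) unfolding d_def submodule_def by blast
  have wX: "(z, mzero B) \<in> compl_closure E \<times> H'" using z B(2) by (simp add: submodule_def)
  have "madd Mh (madd Mh (fst d0) (cemb s M e)) (msmult Mh (qmul s n) z) = fst x"
    using yz[symmetric] Mh.add_diff_cancel[OF yC(2,1)] yC ceC zC by (simp add: Mh.a_assoc)
  moreover have "snd x \<in> carrier B" using x B(2) by (auto simp: submodule_def)
  ultimately have "x = madd (prodmod Mh B) d (msmult (prodmod Mh B) (qmul s n) (z, mzero B))"
    using d0(2) unfolding d_def by (simp add: prod_eq_iff)
  then show ?thesis using dD wX by blast
qed

lemma (in s_adic_module) dense_submodule_compl_closure_times:
  assumes mc: "mult_closed_seq s" and tf: "q_torsion_free"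
    and E: "submodule M E" "qpure E"
    and B: "is_rmod B" "submodule B H'"
    and Dom: "submodule (prodmod Mh B) Dom" "Dom \<subseteq> compl_closure E \<times> H'" "snd ` Dom = H'"
    and E_Dom: "(\<lambda>e. (cemb s M e, mzero B)) ` E \<subseteq> Dom"
    and pure: "pure s (submod (prodmod Mh B) (carrier Mh \<times> H')) Dom"
  shows "dense_submodule (prodmod Mh B) s (compl_closure E \<times> H') Dom"
proof
  show "is_rmod (prodmod Mh B)" by (rule prodmod_is_rmod[OF is_rmod_completion B(1)])
  show "pure s (submod (prodmod Mh B) (compl_closure E \<times> H')) Dom"
    by (rule pure_submod_mono[OF pure Dom(2)]) (use compl_closure_subset in auto)
  show "submodule (prodmod Mh B) (compl_closure E \<times> H')"
    by (rule submodule_Times[OF compl_closure_submodule[OF E(1)] B(2)])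
  show "\<exists>d\<in>Dom. \<exists>w\<in>compl_closure E \<times> H'. x = madd (prodmod Mh B) d (msmult (prodmod Mh B) (qmul s n) w)"
    if "x \<in> compl_closure E \<times> H'" for x n
    by (rule compl_closure_times_dense[OF mc tf E B Dom E_Dom that])
qed (use Dom mc in auto)

theorem lemma4p3:
  fixes s :: "nat \<Rightarrow> 'r::comm_ring_1"
    and H :: "('r, 'h) rmod"
    and H' :: "'h set"
    and E' :: "('k list \<Rightarrow> 'r) set"
    and Dom :: "((nat \<Rightarrow> ('k list \<Rightarrow> 'r) set) \<times> 'h) set"
    and \<phi> :: "(nat \<Rightarrow> ('k list \<Rightarrow> 'r) set) \<times> 'h \<Rightarrow> (nat \<Rightarrow> ('k list \<Rightarrow> 'r) set) \<times> 'h"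
  assumes S_mc: "mult_closed_seq s"
    and R_red: "S_reduced_ring s"
    and R_tf: "S_torsion_free_ring s"
    and R_ctf: "cotorsion_free s (ringmod :: ('r, 'r) rmod)"
    and lam_inf: "infinite (UNIV :: 'k set)"
    and lam_pow: "(UNIV :: (nat \<Rightarrow> 'k) set) \<approx> (UNIV :: 'k set)"
    and lam_R: "(UNIV :: 'r set) \<prec> (UNIV :: 'k set)"
    and H_mod: "is_rmod H"
    and H_ctf: "cotorsion_free s H"
    and H_card: "carrier H \<prec> (UNIV :: 'k set)"
    and H'_sub: "submodule H H'"
    and H'_pure: "pure s H H'"
    and E'_sum: "direct_summand (freemod :: ('r, 'k list \<Rightarrow> 'r) rmod) E'"
    and Dom_sub: "submodule (prodmod (completion s (freemod :: ('r, 'k list \<Rightarrow> 'r) rmod)) (submod H H')) Dom"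
    and Dom_pure: "pure s (prodmod (completion s (freemod :: ('r, 'k list \<Rightarrow> 'r) rmod)) (submod H H')) Dom"
    and E'_Dom: "(\<lambda>e. (cemb s (freemod :: ('r, 'k list \<Rightarrow> 'r) rmod) e, mzero H)) ` E' \<subseteq> Dom"
    and E'_pure: "pure s (submod (prodmod (completion s (freemod :: ('r, 'k list \<Rightarrow> 'r) rmod)) H) Dom) ((\<lambda>e. (cemb s (freemod :: ('r, 'k list \<Rightarrow> 'r) rmod) e, mzero H)) ` E')"
    and Dom_proj: "snd ` Dom = H'"
    and Dom_in: "Dom \<subseteq> (sub_completion s (freemod :: ('r, 'k list \<Rightarrow> 'r) rmod) E') \<times> H'"
    and \<phi>_hom: "rhom (submod (prodmod (completion s (freemod :: ('r, 'k list \<Rightarrow> 'r) rmod)) H) Dom) (prodmod (completion s (freemod :: ('r, 'k list \<Rightarrow> 'r) rmod)) H) \<phi>"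
  shows "\<exists>\<psi>. rhom (submod (prodmod (completion s (freemod :: ('r, 'k list \<Rightarrow> 'r) rmod)) H) ((sub_completion s (freemod :: ('r, 'k list \<Rightarrow> 'r) rmod) E') \<times> H')) (prodmod (completion s (freemod :: ('r, 'k list \<Rightarrow> 'r) rmod)) (completion s H)) \<psi> \<and>
           (\<forall>x\<in>Dom. \<psi> x = (fst (\<phi> x), cemb s H (snd (\<phi> x)))) \<and>
           (\<forall>\<psi>'. rhom (submod (prodmod (completion s (freemod :: ('r, 'k list \<Rightarrow> 'r) rmod)) H) ((sub_completion s (freemod :: ('r, 'k list \<Rightarrow> 'r) rmod) E') \<times> H')) (prodmod (completion s (freemod :: ('r, 'k list \<Rightarrow> 'r) rmod)) (completion s H)) \<psi>' \<and>
                  (\<forall>x\<in>Dom. \<psi>' x = (fst (\<phi> x), cemb s H (snd (\<phi> x)))) \<longrightarrow>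
                  (\<forall>x\<in>(sub_completion s (freemod :: ('r, 'k list \<Rightarrow> 'r) rmod) E') \<times> H'. \<psi>' x = \<psi> x))"
proof -
  let ?F = "freemod :: ('r, 'k list \<Rightarrow> 'r) rmod"
  let ?P = "prodmod (completion s ?F) H"
  interpret F: s_adic_module ?F s by unfold_locales (rule freemod_is_rmod)
  interpret H: s_adic_module H s by unfold_locales (rule H_mod)
  have E': "submodule ?F E'" "F.qpure E'"
    using E'_sum F.direct_summand_qpure by (auto simp: direct_summand_def)
  have X_eq: "sub_completion s ?F E' = F.compl_closure E'"
    by (rule F.sub_completion_eq_compl_closure[OF E'])
  have "submodule ?P Dom"
    using Dom_sub unfolding prodmod_submod by (rule submodule_submod) (use H'_sub in \<open>auto simp: submodule_def\<close>)
  moreover have "pure s (submod ?P (carrier (completion s ?F) \<times> H')) Dom"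
    using Dom_pure unfolding prodmod_submod .
  ultimately interpret D: dense_submodule ?P s "F.compl_closure E' \<times> H'" Dom
    using F.dense_submodule_compl_closure_times[OF S_mc freemod_q_torsion_free[OF R_tf] E' H_mod H'_sub]
      Dom_in Dom_proj E'_Dom unfolding X_eq by blast
  have "rhom (submod ?P Dom) (prodmod (completion s ?F) (completion s H))
      (\<lambda>d. (fst (\<phi> d), cemb s H (snd (\<phi> d))))"
    using \<phi>_hom rhom_comp[OF _ H.cemb_rhom] by (auto simp: rhom_prodmod_iff comp_def)
  from D.extension_prodmod_unique[OF freemod_is_rmod H_mod this]
  show ?thesis unfolding X_eq by simp
qed

end
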